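(* For a positive integer $n$ let $\Delta^{(odd)}_3([0,n))$ denote the number of odd evil integers in $[0,n)$ divisible by $3$ minus the number of odd odious integers in $[0,n)$ divisible by $3$. Then $$\lim_{n\to\infty}\frac{\ln \Delta^{(odd)}_3([0,n))}{\ln n}=\frac{\ln 3}{\ln 4}.$$
   Context: A nonnegative integer is called evil if its binary expansion contains an even number of 1's, and odious if it contains an odd number of 1's. $[0,n)$ denotes the set of integers $x$ with $0\le x<n$. *)

theory Defs
  imports Complex_Main
begin

fun bin_ones :: "nat \<Rightarrow> nat" where
  "bin_ones n = (if n = 0 then 0 else n mod 2 + bin_ones (n div 2))"

declare bin_ones.simps [simp del]

definition evil :: "nat \<Rightarrow> bool" where
  "evil x \<longleftrightarrow> even (bin_ones x)"

definition odious :: "nat \<Rightarrow> bool" where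
  "odious x \<longleftrightarrow> odd (bin_ones x)"

definition Delta_odd3 :: "nat \<Rightarrow> int" where
  "Delta_odd3 n =
     int (card {x \<in> {0..<n}. odd x \<and> 3 dvd x \<and> evil x})
   - int (card {x \<in> {0..<n}. odd x \<and> 3 dvd x \<and> odious x})"

end

theory Submission
  imports Defs
begin

text \<open>Write \<open>s(z) = (-1) ^ bin_ones z\<close> for the Thue--Morse sign. The odd multiples of 3
  below \<open>n\<close> are the numbers \<open>2 z + 1\<close> with \<open>z < n div 2\<close> and \<open>z \<equiv> 1 (mod 3)\<close>, and
  \<open>s(2 z + 1) = - s(z)\<close>, so \<open>\<Delta>(n)\<close> is minus the sum of \<open>s(z)\<close> over those \<open>z\<close>.
  Because \<open>s(d 4\<^sup>k + z) = s(d) s(z)\<close> for \<open>z < 4\<^sup>k\<close> and \<open>4\<^sup>k \<equiv> 1 (mod 3)\<close>, the three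
  residue-class sums over \<open>[0, 4\<^sup>k\<^sup>+\<^sup>1)\<close> are assembled from those over four blocks of
  length \<open>4\<^sup>k\<close>, with signs and a cyclic shift of the classes. This gives the exact
  values \<open>(2 \<cdot> 3\<^sup>k, -3\<^sup>k, -3\<^sup>k)\<close> at \<open>4\<^sup>k\<^sup>+\<^sup>1\<close> and, by induction over the blocks,
  \<open>3\<^sup>k\<^sup>-\<^sup>1 \<le> \<Delta>(n) \<le> 3\<^sup>k\<close> whenever \<open>4\<^sup>k < n div 2 \<le> 4\<^sup>k\<^sup>+\<^sup>1\<close>. Hence
  \<open>ln \<Delta>(n) = (ln 3 / ln 4) ln n + O(1)\<close>.\<close>

definition tm_sign :: "nat \<Rightarrow> int" where
  "tm_sign n = (-1) ^ bin_ones n"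

definition tm_sum_mod3 :: "nat \<Rightarrow> nat \<Rightarrow> int" where
  "tm_sum_mod3 t m = (\<Sum>z<m. if (t + z) mod 3 = 0 then tm_sign z else 0)"

lemma bin_ones_0 [simp]: "bin_ones 0 = 0"
  by (subst bin_ones.simps) simp

lemma bin_ones_mult2_add:
  assumes "b < 2"
  shows "bin_ones (2 * a + b) = bin_ones a + b"
proof (cases "2 * a + b = 0")
  case False
  then show ?thesis using assms by (subst bin_ones.simps) simp
qed (use assms in simp)

lemma bin_ones_mult_power2_add:
  "b < 2 ^ j \<Longrightarrow> bin_ones (a * 2 ^ j + b) = bin_ones a + bin_ones b"
proof (induction j arbitrary: b)
  case (Suc j)
  have split: "a * 2 ^ Suc j + b = 2 * (a * 2 ^ j + b div 2) + b mod 2" by simp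
  have "bin_ones (a * 2 ^ Suc j + b) = bin_ones (a * 2 ^ j + b div 2) + b mod 2"
    unfolding split by (rule bin_ones_mult2_add) simp
  also have "\<dots> = bin_ones a + (bin_ones (b div 2) + b mod 2)"
    using Suc by simp
  also have "bin_ones (b div 2) + b mod 2 = bin_ones b"
    using bin_ones_mult2_add[of "b mod 2" "b div 2"] by simp
  finally show ?case .
qed simp

lemma tm_sign_mult2_add1: "tm_sign (2 * a + 1) = - tm_sign a"
  using bin_ones_mult2_add[of 1 a] by (simp add: tm_sign_def)

lemma tm_sign_mult_power4_add:
  assumes "z < 4 ^ k"
  shows "tm_sign (d * 4 ^ k + z) = tm_sign d * tm_sign z"
proof -
  have "(4::nat) ^ k = 2 ^ (2 * k)" by (simp add: power_mult)
  then show ?thesis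
    using assms bin_ones_mult_power2_add[of z "2 * k" d] by (simp add: tm_sign_def power_add)
qed

lemma tm_sign_small: "tm_sign 0 = 1" "tm_sign 1 = -1" "tm_sign 2 = -1" "tm_sign 3 = 1"
  using tm_sign_mult2_add1[of 0] tm_sign_mult2_add1[of 1] bin_ones_mult2_add[of 0 1]
  by (simp_all add: tm_sign_def)

lemma tm_sum_mod3_0 [simp]: "tm_sum_mod3 t 0 = 0"
  by (simp add: tm_sum_mod3_def)

lemma tm_sum_mod3_Suc:
  "tm_sum_mod3 t (Suc m) = tm_sum_mod3 t m + (if (t + m) mod 3 = 0 then tm_sign m else 0)"
  by (simp add: tm_sum_mod3_def)

lemma tm_sum_mod3_small:
  "tm_sum_mod3 0 1 = 1" "tm_sum_mod3 1 1 = 0" "tm_sum_mod3 2 1 = 0"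
  "tm_sum_mod3 0 2 = 1" "tm_sum_mod3 1 2 = 0" "tm_sum_mod3 2 2 = -1"
  "tm_sum_mod3 0 3 = 1" "tm_sum_mod3 1 3 = -1" "tm_sum_mod3 2 3 = -1"
  "tm_sum_mod3 0 4 = 2" "tm_sum_mod3 1 4 = -1" "tm_sum_mod3 2 4 = -1"
  by (simp_all add: tm_sum_mod3_def lessThan_nat_numeral tm_sign_small
      tm_sign_small(2)[unfolded One_nat_def])

text \<open>Since \<open>4 ^ k \<equiv> 1 (mod 3)\<close>, the block starting at \<open>d * 4 ^ k\<close> is the initial block
  with sign \<open>tm_sign d\<close> and residues shifted by \<open>d\<close>.\<close>
lemma tm_sum_mod3_shift:
  assumes "m \<le> 4 ^ k" and "(t + d) mod 3 = s mod 3"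
  shows "tm_sum_mod3 t (d * 4 ^ k + m) = tm_sum_mod3 t (d * 4 ^ k) + tm_sign d * tm_sum_mod3 s m"
  using assms(1)
proof (induction m)
  case (Suc m)
  have "(4::nat) ^ k mod 3 = 1"
    by (subst power_mod[symmetric]) simp
  then have "(d * 4 ^ k) mod 3 = d mod 3"
    by (metis mod_mult_right_eq mult.right_neutral)
  then have "(t + (d * 4 ^ k + m)) mod 3 = ((t + d) mod 3 + m) mod 3"
    by (metis add.assoc add.commute mod_add_left_eq)
  also have "\<dots> = (s + m) mod 3"
    by (metis assms(2) mod_add_left_eq)
  finally have "(t + (d * 4 ^ k + m)) mod 3 = (s + m) mod 3" .
  moreover have "m < 4 ^ k" "m \<le> 4 ^ k" using Suc.prems by simp_all
  ultimately show ?case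
    using Suc.IH tm_sign_mult_power4_add[of m k d]
    by (simp add: tm_sum_mod3_Suc algebra_simps)
qed simp

lemma tm_sum_mod3_blocks:
  assumes "m \<le> 4 ^ k"
  shows
    "tm_sum_mod3 0 (4 ^ k + m) = tm_sum_mod3 0 (4 ^ k) - tm_sum_mod3 1 m"
    "tm_sum_mod3 1 (4 ^ k + m) = tm_sum_mod3 1 (4 ^ k) - tm_sum_mod3 2 m"
    "tm_sum_mod3 2 (4 ^ k + m) = tm_sum_mod3 2 (4 ^ k) - tm_sum_mod3 0 m"
    "tm_sum_mod3 0 (2 * 4 ^ k + m) = tm_sum_mod3 0 (2 * 4 ^ k) - tm_sum_mod3 2 m"
    "tm_sum_mod3 1 (2 * 4 ^ k + m) = tm_sum_mod3 1 (2 * 4 ^ k) - tm_sum_mod3 0 m"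
    "tm_sum_mod3 2 (2 * 4 ^ k + m) = tm_sum_mod3 2 (2 * 4 ^ k) - tm_sum_mod3 1 m"
    "tm_sum_mod3 0 (3 * 4 ^ k + m) = tm_sum_mod3 0 (3 * 4 ^ k) + tm_sum_mod3 0 m"
    "tm_sum_mod3 1 (3 * 4 ^ k + m) = tm_sum_mod3 1 (3 * 4 ^ k) + tm_sum_mod3 1 m"
    "tm_sum_mod3 2 (3 * 4 ^ k + m) = tm_sum_mod3 2 (3 * 4 ^ k) + tm_sum_mod3 2 m"
  using tm_sum_mod3_shift[OF assms, of 0 1 1] tm_sum_mod3_shift[OF assms, of 1 1 2]
    tm_sum_mod3_shift[OF assms, of 2 1 0] tm_sum_mod3_shift[OF assms, of 0 2 2]
    tm_sum_mod3_shift[OF assms, of 1 2 0] tm_sum_mod3_shift[OF assms, of 2 2 1]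
    tm_sum_mod3_shift[OF assms, of 0 3 0] tm_sum_mod3_shift[OF assms, of 1 3 1]
    tm_sum_mod3_shift[OF assms, of 2 3 2]
  by (simp_all add: tm_sign_small tm_sign_small(2)[unfolded One_nat_def])

lemma tm_sum_mod3_multiples_power4:
  assumes "tm_sum_mod3 0 (4 ^ k) = 2 * u" "tm_sum_mod3 1 (4 ^ k) = - u"
    "tm_sum_mod3 2 (4 ^ k) = - u"
  shows
    "tm_sum_mod3 0 (2 * 4 ^ k) = 3 * u" "tm_sum_mod3 1 (2 * 4 ^ k) = 0"
    "tm_sum_mod3 2 (2 * 4 ^ k) = - 3 * u"
    "tm_sum_mod3 0 (3 * 4 ^ k) = 4 * u" "tm_sum_mod3 1 (3 * 4 ^ k) = - 2 * u"
    "tm_sum_mod3 2 (3 * 4 ^ k) = - 2 * u"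
    "tm_sum_mod3 0 (4 ^ Suc k) = 6 * u" "tm_sum_mod3 1 (4 ^ Suc k) = - 3 * u"
    "tm_sum_mod3 2 (4 ^ Suc k) = - 3 * u"
proof -
  have "4 ^ k + 4 ^ k = 2 * (4::nat) ^ k" "2 * 4 ^ k + 4 ^ k = 3 * (4::nat) ^ k"
    "3 * 4 ^ k + 4 ^ k = (4::nat) ^ Suc k"
    by simp_all
  with tm_sum_mod3_blocks[OF order_refl, of k] assms
  show "tm_sum_mod3 0 (2 * 4 ^ k) = 3 * u" "tm_sum_mod3 1 (2 * 4 ^ k) = 0"
    "tm_sum_mod3 2 (2 * 4 ^ k) = - 3 * u"
    "tm_sum_mod3 0 (3 * 4 ^ k) = 4 * u" "tm_sum_mod3 1 (3 * 4 ^ k) = - 2 * u"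
    "tm_sum_mod3 2 (3 * 4 ^ k) = - 2 * u"
    "tm_sum_mod3 0 (4 ^ Suc k) = 6 * u" "tm_sum_mod3 1 (4 ^ Suc k) = - 3 * u"
    "tm_sum_mod3 2 (4 ^ Suc k) = - 3 * u"
    by simp_all
qed

lemma tm_sum_mod3_power4:
  "tm_sum_mod3 0 (4 ^ Suc k) = 2 * 3 ^ k \<and> tm_sum_mod3 1 (4 ^ Suc k) = - (3 ^ k)
     \<and> tm_sum_mod3 2 (4 ^ Suc k) = - (3 ^ k)"
proof (induction k)
  case 0
  then show ?case using tm_sum_mod3_small(10-12) by simp
next
  case (Suc k)
  then show ?case
    using tm_sum_mod3_multiples_power4(7-9)[of "Suc k" "3 ^ k"] by simp
qed

lemma power4_block_cases:
  fixes m X :: nat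
  assumes "m \<le> 4 * X"
  obtains "m \<le> X"
    | m' where "m = X + m'" "m' \<le> X"
    | m' where "m = 2 * X + m'" "m' \<le> X"
    | m' where "m = 3 * X + m'" "m' \<le> X"
proof -
  consider "m \<le> X" | "X < m" "m \<le> 2 * X" | "2 * X < m" "m \<le> 3 * X" | "3 * X < m"
    by linarith
  then show ?thesis
  proof cases
    case 2
    then show ?thesis using that(2)[of "m - X"] by simp
  next
    case 3
    then show ?thesis using that(3)[of "m - 2 * X"] by simp
  next
    case 4
    then show ?thesis using that(4)[of "m - 3 * X"] assms by simp
  qed (use that(1) in simp)
qed

lemma tm_sum_mod3_bounds:
  "m \<le> 4 ^ Suc k \<Longrightarrow>
     0 \<le> tm_sum_mod3 0 m \<and> tm_sum_mod3 0 m \<le> 2 * 3 ^ k \<and>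
     - (3 ^ k) \<le> tm_sum_mod3 1 m \<and> tm_sum_mod3 1 m \<le> 0 \<and>
     - (3 ^ k) \<le> tm_sum_mod3 2 m \<and> tm_sum_mod3 2 m \<le> 0"
proof (induction k arbitrary: m)
  case 0
  then have "m = 0 \<or> m = 1 \<or> m = 2 \<or> m = 3 \<or> m = 4" by auto
  then show ?case using tm_sum_mod3_small by auto
next
  case (Suc k)
  define X :: nat where "X = 4 ^ Suc k"
  have at_X: "tm_sum_mod3 0 X = 2 * 3 ^ k" "tm_sum_mod3 1 X = - (3 ^ k)"
    "tm_sum_mod3 2 X = - (3 ^ k)"
    using tm_sum_mod3_power4[of k] by (simp_all add: X_def)
  note at_multiples = tm_sum_mod3_multiples_power4[of "Suc k", folded X_def, OF at_X]
  note blocks = tm_sum_mod3_blocks[of _ "Suc k", folded X_def]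
  note IH = Suc.IH[folded X_def]
  have "m \<le> 4 * X" using Suc.prems by (simp add: X_def)
  then show ?case
  proof (cases rule: power4_block_cases)
    case 1
    then show ?thesis using IH[of m] by auto
  next
    case (2 m')
    then show ?thesis using IH[of m'] blocks(1-3)[of m'] at_X by auto
  next
    case (3 m')
    then show ?thesis using IH[of m'] blocks(4-6)[of m'] at_multiples by auto
  next
    case (4 m')
    then show ?thesis using IH[of m'] blocks(7-9)[of m'] at_multiples by auto
  qed
qed

lemma tm_sum_mod3_2_upper:
  assumes "4 ^ k < m" "m \<le> 4 ^ Suc k"
  shows "3 * tm_sum_mod3 2 m \<le> - (3 ^ k)"
proof (cases k)
  case 0
  with assms have "m = 2 \<or> m = 3 \<or> m = 4" by auto
  then show ?thesis using tm_sum_mod3_small \<open>k = 0\<close> by auto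
next
  case (Suc j)
  define X :: nat where "X = 4 ^ Suc j"
  have at_X: "tm_sum_mod3 0 X = 2 * 3 ^ j" "tm_sum_mod3 1 X = - (3 ^ j)"
    "tm_sum_mod3 2 X = - (3 ^ j)"
    using tm_sum_mod3_power4[of j] by (simp_all add: X_def)
  note at_multiples = tm_sum_mod3_multiples_power4[of "Suc j", folded X_def, OF at_X]
  note blocks = tm_sum_mod3_blocks[of _ "Suc j", folded X_def]
  note bounds = tm_sum_mod3_bounds[of _ j, folded X_def]
  have "m \<le> 4 * X" using assms(2) by (simp add: X_def Suc)
  then show ?thesis
  proof (cases rule: power4_block_cases)
    case 1
    then show ?thesis using assms(1) by (simp add: X_def Suc)
  next
    case (2 m')
    then show ?thesis using bounds[of m'] blocks(3)[of m'] at_X by (simp add: Suc)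
  next
    case (3 m')
    then show ?thesis using bounds[of m'] blocks(6)[of m'] at_multiples by (simp add: Suc)
  next
    case (4 m')
    then show ?thesis using bounds[of m'] blocks(9)[of m'] at_multiples by (simp add: Suc)
  qed
qed

lemma Delta_odd3_eq_sum:
  "Delta_odd3 n = (\<Sum>x<n. if odd x \<and> 3 dvd x then tm_sign x else 0)"
proof -
  have card_eq: "int (card {x \<in> {0..<n}. odd x \<and> 3 dvd x \<and> P x})
      = (\<Sum>x<n. if odd x \<and> 3 dvd x \<and> P x then 1 else 0)" for P
    by (simp add: sum.If_cases lessThan_atLeast0 Int_def)
  show ?thesis
    unfolding Delta_odd3_def card_eq sum_subtractf[symmetric]
    by (rule sum.cong) (auto simp: tm_sign_def evil_def odious_def)
qed

lemma sum_odd_multiples_of_3_tm_sign: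
  "(\<Sum>x<2 * m. if odd x \<and> 3 dvd x then tm_sign x else 0) = - tm_sum_mod3 2 m"
proof (induction m)
  case (Suc m)
  have "3 dvd (2 * m + 1) \<longleftrightarrow> (2 + m) mod 3 = 0" by presburger
  then show ?case
    using Suc tm_sign_mult2_add1[of m] by (simp add: tm_sum_mod3_Suc)
qed simp

lemma Delta_odd3_eq_tm_sum_mod3: "Delta_odd3 n = - tm_sum_mod3 2 (n div 2)"
proof -
  have "(\<Sum>x<n. if odd x \<and> 3 dvd x then tm_sign x else 0)
      = (\<Sum>x<2 * (n div 2). if odd x \<and> 3 dvd x then tm_sign x else 0)"
  proof (cases "even n")
    case False
    then obtain q where "n = 2 * q + 1" by (rule oddE)
    then show ?thesis by simp
  qed simp
  then show ?thesis
    by (simp add: Delta_odd3_eq_sum sum_odd_multiples_of_3_tm_sign)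
qed

lemma Delta_odd3_power_bounds:
  assumes "4 \<le> n"
  obtains k where "3 ^ k \<le> 3 * Delta_odd3 n" "Delta_odd3 n \<le> 3 ^ k" "4 ^ k < n" "n \<le> 16 * 4 ^ k"
proof -
  have "2 \<le> n div 2" using assms by linarith
  then obtain k where k: "4 ^ k < n div 2" "n div 2 \<le> 4 ^ Suc k"
    using ex_power_ivl2[of 4 "n div 2"] by auto
  have "3 ^ k \<le> 3 * Delta_odd3 n"
    using tm_sum_mod3_2_upper[OF k] by (simp add: Delta_odd3_eq_tm_sum_mod3)
  moreover have "Delta_odd3 n \<le> 3 ^ k"
    using tm_sum_mod3_bounds[OF k(2)] by (simp add: Delta_odd3_eq_tm_sum_mod3)
  moreover have "4 ^ k < n"
    using k(1) by linarith
  moreover have "n \<le> 16 * 4 ^ k"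
    using k(2) power_Suc[of "4::nat" k] one_le_power[of "4::nat" k]
      div_mult_mod_eq[of n 2] mod_less_divisor[of 2 n] by linarith
  ultimately show ?thesis using that by blast
qed

lemma ln_ratio_tendsto_of_power_bounds:
  fixes D :: "nat \<Rightarrow> real" and a b c C :: real
  assumes a: "1 < a" and b: "1 < b" and c: "0 < c"
    and bounds: "\<forall>\<^sub>F n in sequentially. \<exists>k::nat.
                   b ^ k \<le> c * D n \<and> D n \<le> b ^ k \<and> a ^ k < real n \<and> real n \<le> C * a ^ k"
  shows "(\<lambda>n. ln (D n) / ln (real n)) \<longlonglongrightarrow> ln b / ln a"
proof -
  define \<rho> where "\<rho> = ln b / ln a"
  define M where "M = \<rho> * ln C + ln c"
  have ln_a: "ln a > 0" and \<rho>: "\<rho> * ln a = ln b" "\<rho> > 0"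
    using a b by (simp_all add: \<rho>_def)
  have squeeze: "\<rho> - M / ln (real n) \<le> ln (D n) / ln (real n) \<and> ln (D n) / ln (real n) \<le> \<rho>"
    if "b ^ k \<le> c * D n" "D n \<le> b ^ k" "a ^ k < real n" "real n \<le> C * a ^ k" for n k
  proof -
    have "0 < b ^ k" using b by simp
    then have "D n > 0" using that(1) c zero_less_mult_pos[of c "D n"] by linarith
    then have "ln (b ^ k) \<le> ln (c * D n)" "ln (D n) \<le> ln (b ^ k)"
      using that(1,2) \<open>0 < b ^ k\<close> c by simp_all
    then have lnD: "k * ln b - ln c \<le> ln (D n)" "ln (D n) \<le> k * ln b"
      using b c \<open>D n > 0\<close> by (simp_all add: ln_mult ln_realpow)
    have ak_pos: "0 < a ^ k" using a by simp
    moreover have "0 < C * a ^ k" using that(3,4) ak_pos by linarith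
    ultimately have "C > 0" using zero_less_mult_pos2[of C "a ^ k"] by blast
    have "ln (a ^ k) < ln (real n)" "ln (real n) \<le> ln (C * a ^ k)"
      using that(3,4) ak_pos by simp_all
    then have lnn: "k * ln a < ln (real n)" "ln (real n) \<le> ln C + k * ln a"
      using a \<open>C > 0\<close> by (simp_all add: ln_mult ln_realpow)
    have L_pos: "ln (real n) > 0"
      using lnn(1) ln_a mult_nonneg_nonneg[of "real k" "ln a"] by linarith
    have k_ln_b: "real k * ln b = \<rho> * (real k * ln a)"
      by (metis \<rho>(1) mult.left_commute)
    have "\<rho> * ln (real n) - M \<le> ln (D n)"
      using lnD(1) mult_left_mono[OF lnn(2) less_imp_le[OF \<rho>(2)]] k_ln_b
      by (simp add: M_def algebra_simps)
    moreover have "ln (D n) \<le> \<rho> * ln (real n)"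
      using lnD(2) mult_strict_left_mono[OF lnn(1) \<rho>(2)] k_ln_b by linarith
    moreover have "\<rho> - M / ln (real n) = (\<rho> * ln (real n) - M) / ln (real n)"
      using L_pos by (simp add: field_simps)
    ultimately show ?thesis
      using L_pos by (simp add: divide_right_mono pos_divide_le_eq)
  qed
  have "\<forall>\<^sub>F n in sequentially.
      \<rho> - M / ln (real n) \<le> ln (D n) / ln (real n) \<and> ln (D n) / ln (real n) \<le> \<rho>"
    using bounds by (rule eventually_mono) (use squeeze in blast)
  moreover have "(\<lambda>n. \<rho> - M / ln (real n)) \<longlonglongrightarrow> \<rho>"
    using tendsto_diff[OF tendsto_const tendsto_divide_0[OF tendsto_const
          filterlim_at_top_imp_at_infinity[OF
            filterlim_compose[OF ln_at_top filterlim_real_sequentially]]]]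
    by simp
  ultimately show ?thesis
    unfolding \<rho>_def[symmetric] eventually_conj_iff
    using tendsto_sandwich[of "\<lambda>n. \<rho> - M / ln (real n)" "\<lambda>n. ln (D n) / ln (real n)"
        sequentially "\<lambda>_. \<rho>" \<rho>] by simp
qed

theorem theorem4:
  shows "(\<lambda>n. ln (real_of_int (Delta_odd3 n)) / ln (real n))
           \<longlonglongrightarrow> ln 3 / ln 4"
proof (rule ln_ratio_tendsto_of_power_bounds[where c = 3 and C = 16])
  show "\<forall>\<^sub>F n in sequentially. \<exists>k::nat. 3 ^ k \<le> 3 * real_of_int (Delta_odd3 n)
      \<and> real_of_int (Delta_odd3 n) \<le> 3 ^ k \<and> 4 ^ k < real n \<and> real n \<le> 16 * 4 ^ k"
  proof (rule eventually_sequentiallyI[of 4])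
    fix n :: nat
    assume "4 \<le> n"
    then obtain k where "3 ^ k \<le> 3 * Delta_odd3 n" "Delta_odd3 n \<le> 3 ^ k" "4 ^ k < n"
      "n \<le> 16 * 4 ^ k"
      by (rule Delta_odd3_power_bounds)
    then have "real_of_int (3 ^ k) \<le> real_of_int (3 * Delta_odd3 n)"
      "real_of_int (Delta_odd3 n) \<le> real_of_int (3 ^ k)"
      "real (4 ^ k) < real n" "real n \<le> real (16 * 4 ^ k)"
      by (simp_all only: of_int_le_iff of_nat_less_iff of_nat_le_iff)
    then show "\<exists>k::nat. 3 ^ k \<le> 3 * real_of_int (Delta_odd3 n)
      \<and> real_of_int (Delta_odd3 n) \<le> 3 ^ k \<and> 4 ^ k < real n \<and> real n \<le> 16 * 4 ^ k"
      by (intro exI[of _ k]) simp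
  qed
qed simp_all

end
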